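(* Let $a\in\mathbb{N}$ and $b\neq d\in\mathbb{Z}$ with $a\mid\mathrm{lcm}(b,d)$. Then $\omega(G_{a,b,a,d})=\infty$, i.e. $G_{a,b,a,d}$ contains cliques of every finite size.
   Context: $\mathbb{N}=\{1,2,\dots\}$; convention $\mathrm{lcm}(b,0)=0$. For $a,c\in\mathbb{N}$, $b,d\in\mathbb{Z}$, $R_{a,b,c,d} := \left\{ \frac{an+b}{cn+d} : n \in \mathbb{N} \right\} \cap (\mathbb{Q}_{>0}\setminus\{1\})$; $G_{a,b,c,d}$ is the graph with vertex set $\mathbb{N}$ and edge set $\{\{m,n\}: m/n\in R_{a,b,c,d}\}$. $\omega$ denotes clique number. *)

theory Defs
  imports Main "HOL.Rat"
begin

text \<open>R_{a,b,c,d}: the set of values (an+b)/(cn+d) for n in N = {1,2,...},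
  intersected with the positive rationals other than 1. Division by zero yields 0
  in Isabelle, which is excluded by positivity, matching the paper.\<close>
definition R_set :: "nat \<Rightarrow> int \<Rightarrow> nat \<Rightarrow> int \<Rightarrow> rat set" where
  "R_set a b c d =
     {q. \<exists>n::nat. n \<ge> 1 \<and> q = of_int (int a * int n + b) / of_int (int c * int n + d)}
     \<inter> {q. q > 0 \<and> q \<noteq> 1}"

definition G_adj :: "nat \<Rightarrow> int \<Rightarrow> nat \<Rightarrow> int \<Rightarrow> nat \<Rightarrow> nat \<Rightarrow> bool" where
  "G_adj a b c d m n \<longleftrightarrow> m \<ge> 1 \<and> n \<ge> 1 \<and>
     (of_nat m / of_nat n \<in> R_set a b c d \<or> of_nat n / of_nat m \<in> R_set a b c d)"

definition is_clique :: "nat \<Rightarrow> int \<Rightarrow> nat \<Rightarrow> int \<Rightarrow> nat set \<Rightarrow> bool" where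
  "is_clique a b c d S \<longleftrightarrow> (\<forall>m\<in>S. m \<ge> 1) \<and>
     (\<forall>m\<in>S. \<forall>n\<in>S. m \<noteq> n \<longrightarrow> G_adj a b c d m n)"

end

theory Submission
  imports Defs "HOL-Number_Theory.Number_Theory"
begin

text \<open>Say \<open>b < d\<close> and split \<open>a = m\<^sub>1 m\<^sub>2\<close> with coprime \<open>m\<^sub>1 | b\<close>, \<open>m\<^sub>2 | d\<close>.
  If \<open>x < y\<close> with \<open>m\<^sub>1 (y - x) | x\<close> and \<open>m\<^sub>2 (y - x) | y\<close>, then \<open>u = x / (y - x)\<close> satisfies
  \<open>m\<^sub>1 | u\<close> and \<open>m\<^sub>2 | u + 1\<close>, so both, hence \<open>a\<close>, divide \<open>u (d - b) - b = (u + 1) (d - b) - d\<close>;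
  writing this as \<open>a n\<close> gives \<open>x / y = u / (u + 1) = (a n + b) / (a n + d)\<close>, with \<open>n \<ge> 1\<close> once
  \<open>u\<close> is large.  So it suffices to find arbitrarily large sets all of whose pairs satisfy
  these divisibilities with \<open>y - x\<close> small compared to \<open>x\<close>.  They are translates \<open>N + T\<close>,
  where \<open>T\<close> is built by induction: the new element \<open>P = m\<^sub>2\<^sup>\<gamma> m\<^sub>1 \<Prod>\<^sub>t (t / m\<^sub>2\<^sup>\<gamma>\<^sup>+\<^sup>1)\<close> is added
  and the old set is translated by \<open>P\<close>, keeping track of the power of \<open>m\<^sub>2\<close> in every
  difference; a Chinese remainder shift \<open>N\<close> then makes all the divisibilities hold at once.\<close>

lemma prod_prime_powers_dvd:
  fixes x :: nat
  assumes "finite A" "\<And>p. p \<in> A \<Longrightarrow> prime p" "\<And>p. p \<in> A \<Longrightarrow> e p \<le> multiplicity p x"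
    "x \<noteq> 0"
  shows "(\<Prod>p\<in>A. p ^ e p) dvd x"
proof (rule multiplicity_le_imp_dvd)
  have "0 \<notin> A"
    using assms(2) not_prime_0 by blast
  then show "(\<Prod>p\<in>A. p ^ e p) \<noteq> 0"
    using assms(1) by simp
  fix q :: nat assume "prime q"
  then have "multiplicity q (\<Prod>p\<in>A. p ^ e p) = (if q \<in> A then e q else 0)"
    using assms(1,2) by (intro multiplicity_prod_prime_powers) auto
  then show "multiplicity q (\<Prod>p\<in>A. p ^ e p) \<le> multiplicity q x"
    using assms(3) by simp
qed

lemma dvd_lcm_imp_coprime_factors:
  fixes a x y :: nat
  assumes "a dvd lcm x y"
  obtains m1 m2 where "coprime m1 m2" "m1 dvd x" "m2 dvd y" "m1 * m2 = a"
proof (cases "x = 0 \<or> y = 0")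
  case True
  then show ?thesis
    using that[of a 1] that[of 1 a] by auto
next
  case False
  then have x: "x \<noteq> 0" and y: "y \<noteq> 0"
    by auto
  then have a: "a \<noteq> 0"
    using assms by (metis dvd_0_left lcm_eq_0_iff)
  define A where "A = {p \<in> prime_factors a. multiplicity p a \<le> multiplicity p x}"
  define B where "B = prime_factors a - A"
  define m1 where "m1 = (\<Prod>p\<in>A. p ^ multiplicity p a)"
  define m2 where "m2 = (\<Prod>p\<in>B. p ^ multiplicity p a)"
  have fin: "finite A" "finite B" and prime: "\<And>p. p \<in> A \<union> B \<Longrightarrow> prime p"
    unfolding A_def B_def by auto
  have "m1 * m2 = (\<Prod>p\<in>prime_factors a. p ^ multiplicity p a)"
    unfolding m1_def m2_def
    by (subst prod.union_disjoint[symmetric]) (auto simp: A_def B_def intro!: prod.cong)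
  also have "\<dots> = a"
    using a by (simp add: prod_prime_factors)
  finally have "m1 * m2 = a" .
  moreover have "coprime m1 m2"
    unfolding m1_def m2_def
  proof (intro prod_coprime_left prod_coprime_right)
    fix p q assume "p \<in> A" "q \<in> B"
    then have "prime p" "prime q" "p \<noteq> q"
      using prime by (auto simp: B_def)
    then show "coprime (p ^ multiplicity p a) (q ^ multiplicity q a)"
      by (simp add: primes_coprime)
  qed
  moreover have "m1 dvd x"
    unfolding m1_def using fin(1) prime x by (intro prod_prime_powers_dvd) (auto simp: A_def)
  moreover have "multiplicity q a \<le> multiplicity q y" if "q \<in> B" for q
  proof -
    have "multiplicity q a \<le> multiplicity q (lcm x y)"
      using assms x y by (intro dvd_imp_multiplicity_le) (auto simp: lcm_eq_0_iff)
    also have "\<dots> = max (multiplicity q x) (multiplicity q y)"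
      using x y prime that by (intro multiplicity_lcm) auto
    finally show ?thesis
      using that by (auto simp: A_def B_def)
  qed
  then have "m2 dvd y"
    unfolding m2_def using fin(2) prime y by (intro prod_prime_powers_dvd) auto
  ultimately show ?thesis
    using that by blast
qed

lemma power_Suc_dvd_power_if_power_le:
  fixes m g n :: nat
  assumes "0 < m" "m ^ g \<le> n"
  shows "m ^ Suc g dvd m ^ n"
proof (cases "m = 1")
  case False
  then have "2 ^ g \<le> m ^ g"
    using assms(1) by (intro power_mono) auto
  then have "g < m ^ g"
    using less_exp[of g] by linarith
  then show ?thesis
    using assms(2) by (intro le_imp_power_dvd) simp
qed simp

lemma exists_ge_dvd_and_dvd_add:
  fixes H M c B :: nat
  assumes "coprime H M" "0 < H" "0 < M"
  obtains N where "B \<le> N" "H dvd N" "M dvd N + c"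
proof -
  obtain x where x: "[H * x = 1] (mod M)"
    using cong_solve_coprime_nat[OF assms(1)] by auto
  define N where "N = H * (x * ((M - 1) * c) + M * B)"
  have "[N + c = 1 * ((M - 1) * c) + 0 + c] (mod M)"
    unfolding N_def distrib_left mult.assoc[symmetric]
    by (intro cong_add cong_scalar_right x) (simp_all add: cong_0_iff)
  also have "1 * ((M - 1) * c) + 0 + c = M * c"
    using assms(3) by (simp add: algebra_simps)
  finally have "M dvd N + c"
    by (metis cong_dvd_iff dvd_triv_left)
  moreover have "B \<le> N"
  proof -
    have "B \<le> M * B"
      using assms(3) by simp
    also have "\<dots> \<le> x * ((M - 1) * c) + M * B"
      by simp
    also have "\<dots> \<le> N"
      unfolding N_def using mult_le_mono1[of 1 H] assms(2) by simp
    finally show ?thesis .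
  qed
  ultimately show ?thesis
    using that N_def by simp
qed

lemma coprime_add_mult_iff:
  fixes a m f :: nat
  shows "coprime (a + m * f) m \<longleftrightarrow> coprime a m"
proof -
  have "gcd (a + m * f) m = gcd m (f * m + a)"
    by (subst gcd.commute) (simp add: ac_simps)
  also have "\<dots> = gcd a m"
    by (simp only: gcd_add_mult gcd.commute)
  finally show ?thesis
    by (simp only: coprime_iff_gcd_eq_1)
qed

text \<open>The congruences modulo \<open>m\<^sub>2\<^sup>\<gamma>\<^sup>+\<^sup>1\<close> and \<open>m\<^sub>2\<^sup>g\<^sup>+\<^sup>1\<close> are what let a single shift \<open>N\<close>
  with \<open>N + c\<close> divisible by a high power of \<open>m\<^sub>2\<close> serve all pairs at once.\<close>

definition at_level :: "nat \<Rightarrow> nat \<Rightarrow> nat \<Rightarrow> nat \<Rightarrow> bool" where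
  "at_level m2 \<gamma> c t \<longleftrightarrow>
     0 < t \<and> m2 ^ \<gamma> dvd t \<and> coprime (t div m2 ^ \<gamma>) m2 \<and> [t = c] (mod m2 ^ Suc \<gamma>)"

definition linked :: "nat \<Rightarrow> nat \<Rightarrow> nat \<Rightarrow> nat \<Rightarrow> nat \<Rightarrow> bool" where
  "linked m1 m2 c t t' \<longleftrightarrow> (\<exists>g h. t' - t = m2 ^ g * h \<and> coprime h m2 \<and>
     m1 * h dvd t \<and> h dvd t' \<and> [t' = c] (mod m2 ^ Suc g))"

definition admissible :: "nat \<Rightarrow> nat \<Rightarrow> nat \<Rightarrow> nat \<Rightarrow> nat set \<Rightarrow> bool" where
  "admissible m1 m2 \<gamma> c T \<longleftrightarrow> finite T \<and> m2 ^ \<gamma> dvd c \<and> (\<forall>t\<in>T. at_level m2 \<gamma> c t) \<and>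
     (\<forall>t\<in>T. \<forall>t'\<in>T. t < t' \<longrightarrow> linked m1 m2 c t t')"

lemma at_level_new:
  assumes "0 < m2" "0 < Q" "coprime Q m2" "m2 ^ Suc \<gamma> dvd c"
  shows "at_level m2 \<gamma> (m2 ^ \<gamma> * Q + c) (m2 ^ \<gamma> * Q)"
proof -
  have "[m2 ^ \<gamma> * Q + c = m2 ^ \<gamma> * Q] (mod m2 ^ Suc \<gamma>)"
    using assms(4) by (simp add: cong_add_lcancel_0_nat cong_0_iff)
  then show ?thesis
    using assms(1-3) by (simp add: at_level_def cong_sym)
qed

lemma at_level_shift:
  assumes "0 < m2" "coprime Q m2" "at_level m2 (Suc \<gamma>) c s"
  shows "at_level m2 \<gamma> (m2 ^ \<gamma> * Q + c) (m2 ^ \<gamma> * Q + s)"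
proof -
  define f where "f = s div m2 ^ Suc \<gamma>"
  have s_pos: "0 < s" and s_dvd: "m2 ^ Suc \<gamma> dvd s" and f_cop: "coprime f m2"
    and s_cong: "[s = c] (mod m2 ^ Suc (Suc \<gamma>))"
    using assms(3) unfolding at_level_def f_def by auto
  have "s = m2 ^ \<gamma> * (m2 * f)"
    using dvd_mult_div_cancel[OF s_dvd] unfolding f_def by (simp add: ac_simps)
  then have sum: "m2 ^ \<gamma> * Q + s = m2 ^ \<gamma> * (Q + m2 * f)"
    by (simp add: distrib_left)
  have "coprime (Q + m2 * f) m2"
    unfolding coprime_add_mult_iff by (rule assms(2))
  then have "coprime ((m2 ^ \<gamma> * Q + s) div m2 ^ \<gamma>) m2"
    unfolding sum using assms(1) by simp
  moreover have "[s = c] (mod m2 ^ Suc \<gamma>)"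
    using s_cong by (rule cong_dvd_modulus_nat) (simp add: le_imp_power_dvd)
  then have "[m2 ^ \<gamma> * Q + s = m2 ^ \<gamma> * Q + c] (mod m2 ^ Suc \<gamma>)"
    by (simp add: cong_add_lcancel_nat)
  moreover have "0 < m2 ^ \<gamma> * Q + s"
    using s_pos by simp
  moreover have "m2 ^ \<gamma> dvd m2 ^ \<gamma> * Q + s"
    unfolding sum by simp
  ultimately show ?thesis
    unfolding at_level_def by blast
qed

lemma linked_new:
  assumes "at_level m2 (Suc \<gamma>) c s" "m1 * (s div m2 ^ Suc \<gamma>) dvd P"
  shows "linked m1 m2 (P + c) P (P + s)"
proof -
  define h where "h = s div m2 ^ Suc \<gamma>"
  have "s = m2 ^ Suc \<gamma> * h" "coprime h m2" "[P + s = P + c] (mod m2 ^ Suc (Suc \<gamma>))"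
    using assms(1) by (auto simp: at_level_def h_def cong_add_lcancel_nat)
  moreover have "m1 * h dvd P"
    using assms(2) unfolding h_def .
  moreover from calculation have "h dvd P + s"
    by (metis dvd_add dvd_mult_right dvd_triv_right)
  ultimately have "P + s - P = m2 ^ Suc \<gamma> * h \<and> coprime h m2 \<and> m1 * h dvd P \<and> h dvd P + s \<and>
      [P + s = P + c] (mod m2 ^ Suc (Suc \<gamma>))"
    by simp
  then show ?thesis
    unfolding linked_def by blast
qed

lemma linked_shift:
  assumes "linked m1 m2 c s s'" "\<And>h. coprime h m2 \<Longrightarrow> h dvd s \<Longrightarrow> m1 * h dvd P"
  shows "linked m1 m2 (P + c) (P + s) (P + s')"
proof -
  obtain g h where gh: "s' - s = m2 ^ g * h" "coprime h m2" "m1 * h dvd s" "h dvd s'"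
      "[s' = c] (mod m2 ^ Suc g)"
    using assms(1) unfolding linked_def by blast
  then have "m1 * h dvd P"
    using assms(2) by (meson dvd_mult_right)
  then have "m1 * h dvd P + s" "h dvd P + s'"
    using gh by (auto intro: dvd_add dvd_mult_right)
  then show ?thesis
    using gh unfolding linked_def by (auto simp: cong_add_lcancel_nat)
qed

lemma admissible_singleton:
  assumes "0 < m2"
  shows "admissible m1 m2 \<gamma> (m2 ^ \<gamma>) {m2 ^ \<gamma>}"
  using assms by (simp add: admissible_def at_level_def)

lemma admissible_insert_shift:
  assumes "0 < m2" "0 < Q" "coprime Q m2" "admissible m1 m2 (Suc \<gamma>) c T"
    and f_dvd: "\<And>s. s \<in> T \<Longrightarrow> m1 * (s div m2 ^ Suc \<gamma>) dvd m2 ^ \<gamma> * Q"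
  defines "P \<equiv> m2 ^ \<gamma> * Q"
  shows "admissible m1 m2 \<gamma> (P + c) (insert P ((+) P ` T))"
proof -
  have fin: "finite T" and c: "m2 ^ Suc \<gamma> dvd c"
    and lev: "\<And>s. s \<in> T \<Longrightarrow> at_level m2 (Suc \<gamma>) c s"
    and lnk: "\<And>s s'. s \<in> T \<Longrightarrow> s' \<in> T \<Longrightarrow> s < s' \<Longrightarrow> linked m1 m2 c s s'"
    using assms(4) unfolding admissible_def by auto
  have h_dvd: "m1 * h dvd P" if "s \<in> T" "coprime h m2" "h dvd s" for s h
  proof -
    have "s = m2 ^ Suc \<gamma> * (s div m2 ^ Suc \<gamma>)"
      using lev[OF that(1)] by (simp add: at_level_def)
    then have "h dvd s div m2 ^ Suc \<gamma>"
      using that(2,3) by (metis coprime_dvd_mult_right_iff coprime_power_right_iff)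
    then show ?thesis
      using f_dvd[OF that(1)] unfolding P_def by (meson dvd_trans mult_dvd_mono dvd_refl)
  qed
  have "linked m1 m2 (P + c) t t'" if "t \<in> insert P ((+) P ` T)" "t' \<in> insert P ((+) P ` T)" "t < t'"
    for t t'
  proof -
    from that consider (new) s where "s \<in> T" "t = P" "t' = P + s"
      | (old) s s' where "s \<in> T" "s' \<in> T" "s < s'" "t = P + s" "t' = P + s'"
      by auto
    then show ?thesis
    proof cases
      case new
      then show ?thesis
        using linked_new[OF lev f_dvd] unfolding P_def by simp
    next
      case old
      then show ?thesis
        using linked_shift[OF lnk h_dvd] by simp
    qed
  qed
  moreover have "at_level m2 \<gamma> (P + c) t" if "t \<in> insert P ((+) P ` T)" for t
    using that at_level_new[OF assms(1-3) c] at_level_shift[OF assms(1,3) lev] unfolding P_def by auto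
  moreover have "m2 ^ \<gamma> dvd P + c"
    using dvd_trans[OF le_imp_power_dvd[of \<gamma> "Suc \<gamma>"] c] unfolding P_def by simp
  ultimately show ?thesis
    unfolding admissible_def using fin by blast
qed

lemma admissible_extend:
  assumes "coprime m1 m2" "0 < m1" "0 < m2" "admissible m1 m2 (Suc \<gamma>) c T"
  obtains T' c' where "admissible m1 m2 \<gamma> c' T'" "card T' = Suc (card T)"
proof -
  define Q where "Q = m1 * (\<Prod>s\<in>T. s div m2 ^ Suc \<gamma>)"
  define P where "P = m2 ^ \<gamma> * Q"
  have fin: "finite T" and lev: "\<And>s. s \<in> T \<Longrightarrow> at_level m2 (Suc \<gamma>) c s"
    using assms(4) unfolding admissible_def by auto
  have f_pos: "0 < s div m2 ^ Suc \<gamma>" and f_cop: "coprime (s div m2 ^ Suc \<gamma>) m2"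
    and s_pos: "0 < s" if "s \<in> T" for s
    using lev[OF that] by (auto simp: at_level_def elim!: dvdE)
  have Q_pos: "0 < Q"
    unfolding Q_def using assms(2) fin f_pos by simp
  have Q_cop: "coprime Q m2"
    unfolding Q_def using assms(1) f_cop by (simp add: prod_coprime_left)
  have Q_dvd: "m1 * (s div m2 ^ Suc \<gamma>) dvd m2 ^ \<gamma> * Q" if "s \<in> T" for s
    using dvd_prodI[OF fin that, of "\<lambda>s. s div m2 ^ Suc \<gamma>"] unfolding Q_def
    by (meson dvd_mult mult_dvd_mono dvd_refl)
  have "admissible m1 m2 \<gamma> (P + c) (insert P ((+) P ` T))"
    unfolding P_def using admissible_insert_shift[OF assms(3) Q_pos Q_cop assms(4) Q_dvd] .
  moreover have "P \<notin> (+) P ` T"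
    using s_pos by fastforce
  then have "card (insert P ((+) P ` T)) = Suc (card T)"
    using fin by (simp add: card_image)
  ultimately show ?thesis
    using that by blast
qed

lemma admissible_exists:
  assumes "coprime m1 m2" "0 < m1" "0 < m2"
  shows "\<exists>T c. admissible m1 m2 \<gamma> c T \<and> card T = Suc k"
proof (induction k arbitrary: \<gamma>)
  case 0
  show ?case
    using admissible_singleton[OF assms(3)] by fastforce
next
  case (Suc k)
  then obtain T c where "admissible m1 m2 (Suc \<gamma>) c T" "card T = Suc k"
    by blast
  then show ?case
    using admissible_extend[OF assms] by metis
qed

lemma linked_imp_dvd_shift:
  fixes m1 m2 c t t' N :: nat
  assumes "coprime m1 m2" "0 < m2" "t < t'" "linked m1 m2 c t t'"
    "\<And>h. coprime h m2 \<Longrightarrow> h dvd t \<Longrightarrow> m1 * h dvd N" "m2 ^ t' dvd N + c"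
  shows "m1 * (t' - t) dvd N + t \<and> m2 * (t' - t) dvd N + t'"
proof -
  obtain g h where gh: "t' - t = m2 ^ g * h" "coprime h m2" "m1 * h dvd t" "h dvd t'"
      "[t' = c] (mod m2 ^ Suc g)"
    using assms(4) unfolding linked_def by blast
  have "0 < h"
    using gh(1) assms(3) by (metis gr0I mult_0_right zero_less_diff)
  then have "m2 ^ g \<le> t' - t"
    unfolding gh(1) by simp
  then have "m2 ^ g \<le> t'"
    by simp
  then have "m2 ^ Suc g dvd N + c"
    using dvd_trans[OF power_Suc_dvd_power_if_power_le[OF assms(2)] assms(6)] by blast
  moreover have "[N + t' = N + c] (mod m2 ^ Suc g)"
    using gh(5) by (simp add: cong_add_lcancel_nat)
  ultimately have t'_dvd: "m2 ^ Suc g dvd N + t'"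
    by (simp add: cong_dvd_iff)
  then have "m2 ^ g dvd N + t'"
    by (simp add: dvd_mult_right)
  moreover have "N + t' = (N + t) + m2 ^ g * h"
    using gh(1) assms(3) by simp
  ultimately have "m2 ^ g dvd (N + t) + m2 ^ g * h"
    by simp
  then have m2_t: "m2 ^ g dvd N + t"
    by (simp add: dvd_add_left_iff)
  have h_N: "m1 * h dvd N"
    using assms(5) gh(2,3) by (meson dvd_mult_right)
  then have "m1 * h dvd N + t" "h dvd N + t'"
    using gh(3,4) by (auto intro: dvd_add dvd_mult_right)
  moreover have "coprime (m1 * h) (m2 ^ g)" "coprime h (m2 ^ Suc g)"
    using assms(1) gh(2) by simp_all
  ultimately have "m1 * h * m2 ^ g dvd N + t" "h * m2 ^ Suc g dvd N + t'"
    using divides_mult m2_t t'_dvd by blast+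
  then show ?thesis
    using gh(1) by (simp add: ac_simps)
qed

lemma admissible_shift:
  assumes "coprime m1 m2" "0 < m1" "0 < m2" "admissible m1 m2 \<gamma> c T"
  obtains N where "B \<le> N"
    "\<And>t t'. t \<in> T \<Longrightarrow> t' \<in> T \<Longrightarrow> t < t' \<Longrightarrow> m1 * (t' - t) dvd N + t \<and> m2 * (t' - t) dvd N + t'"
proof -
  define f where "f t = t div m2 ^ \<gamma>" for t
  define H where "H = m1 * (\<Prod>t\<in>T. f t)"
  define M where "M = m2 ^ (\<Sum>T)"
  have fin: "finite T" and lev: "\<And>t. t \<in> T \<Longrightarrow> at_level m2 \<gamma> c t"
    and lnk: "\<And>t t'. t \<in> T \<Longrightarrow> t' \<in> T \<Longrightarrow> t < t' \<Longrightarrow> linked m1 m2 c t t'"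
    using assms(4) unfolding admissible_def by auto
  have t_eq: "t = m2 ^ \<gamma> * f t" and f_pos: "0 < f t" and f_cop: "coprime (f t) m2"
    if "t \<in> T" for t
    using lev[OF that] by (auto simp: at_level_def f_def elim!: dvdE)
  have "coprime H M"
    unfolding H_def M_def using assms(1) f_cop by (simp add: prod_coprime_left)
  moreover have "0 < H"
    unfolding H_def using assms(2) fin f_pos by simp
  ultimately obtain N where N: "B \<le> N" "H dvd N" "M dvd N + c"
    using exists_ge_dvd_and_dvd_add assms(3) unfolding M_def by (metis zero_less_power)
  have "m1 * (t' - t) dvd N + t \<and> m2 * (t' - t) dvd N + t'"
    if tt': "t \<in> T" "t' \<in> T" "t < t'" for t t'
  proof (rule linked_imp_dvd_shift[OF assms(1,3) tt'(3) lnk[OF tt']])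
    show "m1 * h dvd N" if "coprime h m2" "h dvd t" for h
    proof -
      have "h dvd f t"
        using that t_eq[OF tt'(1)] by (metis coprime_dvd_mult_right_iff coprime_power_right_iff)
      then have "m1 * h dvd H"
        unfolding H_def using fin tt'(1) by (meson dvd_prodI mult_dvd_mono dvd_refl dvd_trans)
      then show ?thesis
        using N(2) by (rule dvd_trans)
    qed
    have "m2 ^ t' dvd M"
      unfolding M_def using fin tt'(2) by (intro le_imp_power_dvd member_le_sum) auto
    then show "m2 ^ t' dvd N + c"
      using N(3) by (rule dvd_trans)
  qed
  then show ?thesis
    using that N(1) by blast
qed

lemma R_set_swap:
  assumes "q \<in> R_set a d a b"
  shows "inverse q \<in> R_set a b a d"
proof -
  obtain n where n: "n \<ge> 1" "q = of_int (int a * int n + d) / of_int (int a * int n + b)"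
    "q > 0" "q \<noteq> 1"
    using assms unfolding R_set_def by blast
  have "inverse q = of_int (int a * int n + b) / of_int (int a * int n + d)"
    using n(2) by simp
  moreover have "inverse q > 0" "inverse q \<noteq> 1"
    using n(3,4) by simp_all
  ultimately show ?thesis
    unfolding R_set_def using n(1) by blast
qed

lemma is_clique_swap:
  assumes "is_clique a d a b S"
  shows "is_clique a b a d S"
proof -
  have "G_adj a b a d m n" if "G_adj a d a b m n" for m n
    using that R_set_swap[of "of_nat m / of_nat n"] R_set_swap[of "of_nat n / of_nat m"]
    unfolding G_adj_def by auto
  then show ?thesis
    using assms unfolding is_clique_def by blast
qed

lemma is_clique_of_ordered_pairs:
  assumes "\<forall>m\<in>S. 1 \<le> m" "\<forall>x\<in>S. \<forall>y\<in>S. x < y \<longrightarrow> of_nat x / of_nat y \<in> R_set a b c d"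
  shows "is_clique a b c d S"
  using assms unfolding is_clique_def G_adj_def by (metis linorder_neq_iff)

lemma ratio_succ_mem_R_set:
  fixes a u :: nat and b d :: int
  assumes "1 \<le> a" "b < d" "int a + \<bar>b\<bar> \<le> int u" "int a dvd int u * (d - b) - b"
  shows "of_nat u / of_nat (u + 1) \<in> R_set a b a d"
proof -
  obtain n where n: "int u * (d - b) - b = int a * n"
    using assms(4) by blast
  have "int u \<le> int u * (d - b)"
    using assms(2) by (simp add: mult_le_cancel_left1)
  then have "int a * 1 \<le> int a * n"
    using assms(3) unfolding n[symmetric] by linarith
  then have "1 \<le> n"
    using assms(1) by (simp add: mult_le_cancel_left)
  then have num: "int a * int (nat n) + b = int u * (d - b)"
    using n by simp
  then have den: "int a * int (nat n) + d = int (u + 1) * (d - b)"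
    by (simp add: algebra_simps)
  have "(of_int (int a * int (nat n) + b) :: rat) / of_int (int a * int (nat n) + d) =
      (of_nat u * of_int (d - b)) / (of_nat (u + 1) * of_int (d - b))"
    unfolding num den by simp
  also have "\<dots> = of_nat u / of_nat (u + 1)"
    using assms(2) by (intro mult_divide_mult_cancel_right) simp
  finally have "of_nat u / of_nat (u + 1) =
      (of_int (int a * int (nat n) + b) :: rat) / of_int (int a * int (nat n) + d)" ..
  moreover have "0 < u"
    using assms(1,3) by linarith
  then have "(of_nat u / of_nat (u + 1) :: rat) > 0" "(of_nat u / of_nat (u + 1) :: rat) \<noteq> 1"
    by simp_all
  ultimately show ?thesis
    unfolding R_set_def using \<open>1 \<le> n\<close> by (intro IntI CollectI conjI exI[of _ "nat n"]) simp_all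
qed

context
  fixes a m1 m2 :: nat and b d :: int
  assumes a_pos: "1 \<le> a" and b_less_d: "b < d" and coprime_m: "coprime m1 m2"
    and m1_dvd_b: "int m1 dvd b" and m2_dvd_d: "int m2 dvd d" and a_eq: "m1 * m2 = a"
begin

lemma a_dvd_numerator:
  fixes u :: nat
  assumes "m1 dvd u" "m2 dvd u + 1"
  shows "int a dvd int u * (d - b) - b"
proof -
  have "int m1 dvd int u * (d - b) - b"
    using assms(1) m1_dvd_b by simp
  moreover have "int u * (d - b) - b = int (u + 1) * (d - b) - d"
    by (simp add: algebra_simps)
  then have "int m2 dvd int u * (d - b) - b"
    using assms(2) m2_dvd_d by (metis dvd_diff dvd_mult2 of_nat_dvd_iff)
  moreover have "coprime (int m1) (int m2)"
    using coprime_m by simp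
  ultimately have "int m1 * int m2 dvd int u * (d - b) - b"
    by (rule divides_mult)
  then show ?thesis
    unfolding a_eq[symmetric] by simp
qed

lemma ratio_mem_R_set_of_dvd:
  fixes x y :: nat
  assumes "x < y" "m1 * (y - x) dvd x" "m2 * (y - x) dvd y" "(a + nat \<bar>b\<bar>) * (y - x) \<le> x"
  shows "of_nat x / of_nat y \<in> R_set a b a d"
proof -
  define \<delta> where "\<delta> = y - x"
  have \<delta>: "0 < \<delta>" "y = x + \<delta>"
    using assms(1) unfolding \<delta>_def by auto
  have dvd: "m1 * \<delta> dvd x" "m2 * \<delta> dvd y" and big: "(a + nat \<bar>b\<bar>) * \<delta> \<le> x"
    using assms(2-4) unfolding \<delta>_def by simp_all
  obtain k where k: "x = m1 * \<delta> * k"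
    using dvd(1) by blast
  define u where "u = m1 * k"
  have x: "x = \<delta> * u" and y: "y = \<delta> * (u + 1)"
    using k \<delta>(2) unfolding u_def by (simp_all add: algebra_simps)
  have "\<delta> * m2 dvd \<delta> * (u + 1)"
    using dvd(2) unfolding y by (simp add: mult.commute)
  then have "m2 dvd u + 1"
    using \<delta>(1) nat_mult_dvd_cancel1 by blast
  moreover have "\<delta> * (a + nat \<bar>b\<bar>) \<le> \<delta> * u"
    using big unfolding x by (simp add: mult.commute)
  then have "a + nat \<bar>b\<bar> \<le> u"
    using \<delta>(1) by simp
  then have "int a + \<bar>b\<bar> \<le> int u"
    by linarith
  ultimately have "of_nat u / of_nat (u + 1) \<in> R_set a b a d"
    using a_pos b_less_d by (intro ratio_succ_mem_R_set a_dvd_numerator) (simp_all add: u_def)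
  moreover have "(of_nat x / of_nat y :: rat) = of_nat u / of_nat (u + 1)"
    unfolding x y of_nat_mult using \<delta>(1) by (intro mult_divide_mult_cancel_left) simp
  ultimately show ?thesis
    by simp
qed

lemma ratio_clique_exists:
  "\<exists>S. finite S \<and> card S = k \<and> (\<forall>m\<in>S. 1 \<le> m) \<and>
     (\<forall>x\<in>S. \<forall>y\<in>S. x < y \<longrightarrow> of_nat x / of_nat y \<in> R_set a b a d)"
proof (cases k)
  case 0
  then show ?thesis
    by (intro exI[of _ "{}"]) simp
next
  case (Suc j)
  have "0 < m1 * m2"
    using a_pos a_eq by simp
  then have m_pos: "0 < m1" "0 < m2"
    by simp_all
  obtain T c where T: "admissible m1 m2 0 c T" "card T = k"
    using admissible_exists[OF coprime_m m_pos] Suc by blast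
  have fin: "finite T" and T_pos: "\<And>t. t \<in> T \<Longrightarrow> 0 < t"
    using T(1) unfolding admissible_def at_level_def by auto
  obtain N where N: "(a + nat \<bar>b\<bar>) * \<Sum>T \<le> N" and N_dvd:
    "\<And>t t'. t \<in> T \<Longrightarrow> t' \<in> T \<Longrightarrow> t < t' \<Longrightarrow> m1 * (t' - t) dvd N + t \<and> m2 * (t' - t) dvd N + t'"
    using admissible_shift[OF coprime_m m_pos T(1)] by metis
  have "of_nat (N + t) / of_nat (N + t') \<in> R_set a b a d"
    if "t \<in> T" "t' \<in> T" "t < t'" for t t'
  proof (rule ratio_mem_R_set_of_dvd)
    have "t' - t \<le> \<Sum>T"
      using member_le_sum[of t' T id] fin that(2) by simp
    then have "(a + nat \<bar>b\<bar>) * (t' - t) \<le> (a + nat \<bar>b\<bar>) * \<Sum>T"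
      by (rule mult_le_mono2)
    moreover have "N + t' - (N + t) = t' - t"
      by simp
    ultimately show "(a + nat \<bar>b\<bar>) * (N + t' - (N + t)) \<le> N + t"
      using N by (metis le_trans trans_le_add1)
  qed (use that N_dvd in simp_all)
  then have "\<forall>x\<in>(+) N ` T. \<forall>y\<in>(+) N ` T. x < y \<longrightarrow> of_nat x / of_nat y \<in> R_set a b a d"
    by auto
  moreover have "card ((+) N ` T) = k" "\<forall>m\<in>(+) N ` T. 1 \<le> m"
    using T(2) T_pos by (auto simp: card_image Suc_le_eq)
  ultimately show ?thesis
    using fin by blast
qed

end

lemma clique_exists_of_less:
  fixes a :: nat and b d :: int
  assumes "1 \<le> a" "b < d" "int a dvd lcm b d"
  shows "\<exists>S. finite S \<and> card S = k \<and> is_clique a b a d S"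
proof -
  have "a dvd lcm (nat \<bar>b\<bar>) (nat \<bar>d\<bar>)"
    using assms(3) by (metis lcm_int_def of_nat_dvd_iff)
  then obtain m1 m2 where m: "coprime m1 m2" "m1 dvd nat \<bar>b\<bar>" "m2 dvd nat \<bar>d\<bar>" "m1 * m2 = a"
    by (rule dvd_lcm_imp_coprime_factors)
  then have m1_b: "int m1 dvd b" and m2_d: "int m2 dvd d"
    by (simp_all add: dvd_nat_abs_iff)
  obtain S where "finite S" "card S = k" "\<forall>m\<in>S. 1 \<le> m"
    "\<forall>x\<in>S. \<forall>y\<in>S. x < y \<longrightarrow> of_nat x / of_nat y \<in> R_set a b a d"
    using ratio_clique_exists[OF assms(1,2) m(1) m1_b m2_d m(4), of k] by blast
  then show ?thesis
    using is_clique_of_ordered_pairs[of S a b a d] by blast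
qed

theorem theorem3p2:
  fixes a :: nat and b d :: int
  assumes "a \<ge> 1" and "b \<noteq> d" and "int a dvd lcm b d"
  shows "\<forall>k::nat. \<exists>S. finite S \<and> card S = k \<and> is_clique a b a d S"
proof
  fix k :: nat
  consider "b < d" | "d < b"
    using assms(2) by linarith
  then show "\<exists>S. finite S \<and> card S = k \<and> is_clique a b a d S"
  proof cases
    case 1
    show ?thesis
      by (rule clique_exists_of_less[OF assms(1) 1 assms(3)])
  next
    case 2
    have "int a dvd lcm d b"
      using assms(3) by (simp add: lcm.commute)
    then obtain S where "finite S" "card S = k" "is_clique a d a b S"
      using clique_exists_of_less[OF assms(1) 2, of k] by blast
    then show ?thesis
      using is_clique_swap by blast
  qed
qed

end
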